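(* Let $f>0$, $F>0$, $s\in(0,1]$ with $f+sF>1$, let $0<\Delta<F$, and let $\pi_1\in(0,1)$. Consider the two-class stochastic Leslie model with two environments, $\boldsymbol A_1=\begin{pmatrix} f&F\\ s&0\end{pmatrix}$, $\boldsymbol A_2=\begin{pmatrix} f&F-\Delta\\ s&0\end{pmatrix}$, driven by an i.i.d. environmental sequence with $P(\tau_t=1)=\pi_1$, $P(\tau_t=2)=1-\pi_1$. Then $$\log\lambda_S\ \ge\ \log\rho(\boldsymbol A_1)+(1-\pi_1)\log\Big(1-\frac{\Delta}{F}\Big),$$ and consequently, if $$\Delta<F\Big(1-\rho(\boldsymbol A_1)^{\frac{1}{\pi_1-1}}\Big),\qquad \rho(\boldsymbol A_1)=\frac{f+\sqrt{f^2+4sF}}{2},$$ then $\lambda_S>1$, so the total population tends to infinity with probability one.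
   Context: The stochastic growth rate $\lambda_S$ of $\boldsymbol z(t+1)=\boldsymbol A_{\tau_{t+1}}\boldsymbol z(t)$ (with fixed nonzero $\boldsymbol z(0)\ge0$) is defined by $\log\lambda_S=\lim_{t\to\infty}\frac1t\log\|\boldsymbol z(t)\|_1$ almost surely; $\rho$ denotes spectral radius. *)

theory Defs
  imports "HOL-Probability.Probability"
begin

definition leslie2 :: "real \<Rightarrow> real \<Rightarrow> real \<Rightarrow> real^2^2" where
  "leslie2 f F s = vector [vector [f, F], vector [s, 0]]"

definition spec_rad :: "real^'n^'n \<Rightarrow> real" where
  "spec_rad A = Sup {cmod c | c. \<exists>v::complex^'n. v \<noteq> 0 \<and>
      (\<chi> i j. complex_of_real (A$i$j)) *v v = c *s v}"

definition norm1 :: "real^'n \<Rightarrow> real" where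
  "norm1 z = (\<Sum>i\<in>UNIV. \<bar>z$i\<bar>)"

primrec pop :: "(nat \<Rightarrow> real^'n^'n) \<Rightarrow> (nat \<Rightarrow> 'w \<Rightarrow> nat) \<Rightarrow> real^'n \<Rightarrow> nat \<Rightarrow> 'w \<Rightarrow> real^'n" where
  "pop Aenv \<tau> z0 0 \<omega> = z0"
| "pop Aenv \<tau> z0 (Suc t) \<omega> = Aenv (\<tau> (Suc t) \<omega>) *v pop Aenv \<tau> z0 t \<omega>"

definition log_stoch_growth :: "'w measure \<Rightarrow> (nat \<Rightarrow> real^'n^'n) \<Rightarrow> (nat \<Rightarrow> 'w \<Rightarrow> nat) \<Rightarrow> real^'n \<Rightarrow> real" where
  "log_stoch_growth M Aenv \<tau> z0 = (THE L. AE \<omega> in M.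
      (\<lambda>t. ln (norm1 (pop Aenv \<tau> z0 t \<omega>)) / real t) \<longlonglongrightarrow> L)"

end

theory Submission
  imports Defs
begin

text \<open>Write \<open>z(t) = (z\<^sub>1(t), z\<^sub>2(t))\<close> and \<open>\<rho> = \<rho>(A\<^sub>1)\<close>. With \<open>(\<rho>, F)\<close> a left Perron vector
  of \<open>A\<^sub>1\<close>, the weighted population \<open>\<rho> z\<^sub>1 + F z\<^sub>2\<close> is multiplied in each step by at least \<open>\<rho>\<close>,
  or by at least \<open>\<rho> (1 - \<Delta>/F)\<close> when environment 2 occurs; the strong law of large numbers for the
  frequency of environment 2 then gives the lower bound, and the stated condition on \<open>\<Delta>\<close> makes
  it positive. That \<open>log \<lambda>\<^sub>S\<close> exists at all is shown directly: the growth ratio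
  \<open>z\<^sub>1(t+1)/z\<^sub>1(t)\<close> follows a recursion \<open>x \<mapsto> f + s F\<^sub>k / x\<close> that contracts \<open>log x\<close>, so over
  blocks of length \<open>m\<close> the growth of \<open>log z\<^sub>1\<close> is, up to a bounded error, an i.i.d. sum to which
  the strong law applies; letting \<open>m \<rightarrow> \<infinity>\<close> the error per step vanishes.\<close>

section \<open>Two-class Leslie matrices\<close>

lemma leslie2_mult_vec:
  "(leslie2 a b c *v z) $ 1 = a * z $ 1 + b * z $ 2"
  "(leslie2 a b c *v z) $ 2 = c * z $ 1"
  by (simp_all add: leslie2_def matrix_vector_mult_def sum_2)

lemma leslie2_eigenvalue_eq:
  fixes \<mu> :: complex
  assumes "b \<noteq> 0" "v \<noteq> 0"
    and eig: "(\<chi> i j. complex_of_real (leslie2 a b c $ i $ j)) *v v = \<mu> *s v"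
  shows "\<mu>\<^sup>2 = a * \<mu> + b * c"
proof -
  have e1: "a * v$1 + b * v$2 = \<mu> * v$1" and e2: "c * v$1 = \<mu> * v$2"
    using eig[THEN arg_cong[where f="\<lambda>w. w$1"]] eig[THEN arg_cong[where f="\<lambda>w. w$2"]]
    by (auto simp: matrix_vector_mult_def sum_2 leslie2_def)
  have "v$1 \<noteq> 0"
  proof
    assume "v$1 = 0"
    moreover from this have "v$2 = 0" using e1 assms(1) by simp
    ultimately show False using assms(2) by (simp add: vec_eq_iff forall_2)
  qed
  have "\<mu> * (\<mu> * v$1) = \<mu> * (a * v$1 + b * v$2)" by (simp add: e1)
  also have "\<dots> = a * (\<mu> * v$1) + b * (\<mu> * v$2)" by (simp add: algebra_simps)
  also have "\<dots> = (a * \<mu> + b * c) * v$1" by (simp add: algebra_simps flip: e2)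
  finally show ?thesis using \<open>v$1 \<noteq> 0\<close> by (simp add: power2_eq_square)
qed

lemma spec_rad_leslie2:
  fixes f F s :: real
  assumes "f > 0" "F > 0" "s > 0"
  shows "spec_rad (leslie2 f F s) = (f + sqrt (f\<^sup>2 + 4 * s * F)) / 2"
proof -
  define q where "q = sqrt (f\<^sup>2 + 4 * s * F)"
  define r where "r = (f + q) / 2"
  have qsq: "q\<^sup>2 = f\<^sup>2 + 4 * s * F" unfolding q_def using assms by simp
  have "q \<ge> 0" unfolding q_def using assms by simp
  have "f\<^sup>2 < q\<^sup>2" using qsq assms by simp
  then have "f < q" using \<open>q \<ge> 0\<close> by (rule power2_less_imp_less)
  let ?S = "{cmod c | c. \<exists>v::complex^2. v \<noteq> 0 \<and>
      (\<chi> i j. complex_of_real (leslie2 f F s $ i $ j)) *v v = c *s v}"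
  have "x \<le> r" if x_mem: "x \<in> ?S" for x
  proof -
    obtain \<mu> v where x: "x = cmod \<mu>" "v \<noteq> 0"
      "(\<chi> i j. complex_of_real (leslie2 f F s $ i $ j)) *v v = \<mu> *s v"
      using x_mem by blast
    have eq: "\<mu>\<^sup>2 = f * \<mu> + F * s" using leslie2_eigenvalue_eq[OF _ x(2,3)] assms by simp
    have "(\<mu> - of_real r) * (\<mu> - of_real ((f - q) / 2)) = \<mu>\<^sup>2 - f * \<mu> + of_real ((f\<^sup>2 - q\<^sup>2) / 4)"
      unfolding r_def by (simp add: algebra_simps power2_eq_square field_simps)
    also have "\<dots> = 0" using eq qsq by (simp add: algebra_simps)
    finally have "\<mu> = of_real r \<or> \<mu> = of_real ((f - q) / 2)" by simp
    moreover have "\<bar>r\<bar> \<le> r" "\<bar>(f - q) / 2\<bar> \<le> r" using \<open>f < q\<close> assms unfolding r_def by auto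
    ultimately show ?thesis using x(1) by (metis norm_of_real)
  qed
  moreover have "r \<in> ?S"
  proof -
    define v :: "complex^2" where "v = vector [of_real r, of_real s]"
    have "v$2 \<noteq> 0" using assms by (simp add: v_def)
    then have "v \<noteq> 0" by auto
    have "r * r = f * r + s * F" unfolding r_def using qsq
      by (simp add: algebra_simps power2_eq_square field_simps)
    then have "(\<chi> i j. complex_of_real (leslie2 f F s $ i $ j)) *v v = of_real r *s v"
      unfolding vec_eq_iff forall_2
      by (simp add: matrix_vector_mult_def sum_2 leslie2_def v_def algebra_simps
          flip: of_real_mult of_real_add)
    moreover have "r > 0" using \<open>f < q\<close> assms unfolding r_def by simp
    then have "r = cmod (of_real r)" by (simp only: norm_of_real abs_of_pos)
    ultimately show ?thesis using \<open>v \<noteq> 0\<close> by blast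
  qed
  ultimately have "Sup ?S = r" by (intro cSup_eq_maximum) auto
  then show ?thesis unfolding spec_rad_def r_def q_def .
qed

section \<open>A strong law for bounded independent variables\<close>

lemma (in prob_space) prob_deviation_le:
  fixes X :: "nat \<Rightarrow> 'a \<Rightarrow> real"
  assumes ind: "indep_vars (\<lambda>_. borel) X UNIV"
    and bnd: "\<And>i \<omega>. \<omega> \<in> space M \<Longrightarrow> X i \<omega> \<in> {a..b}" and "a < b"
    and mean: "\<And>i. expectation (X i) = \<mu>"
  shows "prob {\<omega>\<in>space M. \<bar>(\<Sum>i<n. X i \<omega>) - real n * \<mu>\<bar> \<ge> real n / Suc k}
    \<le> 2 * exp (- 2 / ((real (Suc k))\<^sup>2 * (b - a)\<^sup>2)) ^ n"
proof (cases "n = 0")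
  case True
  then show ?thesis by (simp add: prob_space)
next
  case False
  interpret Hoeffding_ineq M "{..<n}" X "\<lambda>_. a" "\<lambda>_. b" "real n * \<mu>"
  proof unfold_locales
    show "indep_vars (\<lambda>_. borel) X {..<n}"
      by (rule indep_vars_subset[OF ind]) simp
  qed (use bnd in \<open>auto intro!: AE_I2 simp: mean\<close>)
  have rescale: "- 2 * (x / K)\<^sup>2 / (x * d) = x * (- 2 / (K\<^sup>2 * d))"
    if "x > 0" "K > 0" "d > 0" for x K d :: real
    using that by (simp add: field_simps power2_eq_square)
  have "prob {\<omega>\<in>space M. \<bar>(\<Sum>i<n. X i \<omega>) - real n * \<mu>\<bar> \<ge> real n / Suc k}
      \<le> 2 * exp (- 2 * (real n / Suc k)\<^sup>2 / (\<Sum>i<n. (b - a)\<^sup>2))"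
    by (rule Hoeffding_ineq_abs_ge) (use False \<open>a < b\<close> in auto)
  also have "- 2 * (real n / Suc k)\<^sup>2 / (\<Sum>i<n. (b - a)\<^sup>2) = real n * (- 2 / ((real (Suc k))\<^sup>2 * (b - a)\<^sup>2))"
    using rescale[of "real n" "real (Suc k)" "(b - a)\<^sup>2"] False \<open>a < b\<close> by simp
  finally show ?thesis by (simp only: exp_of_nat_mult)
qed

text \<open>Hoeffding's inequality makes the deviation probabilities summable, so Borel--Cantelli
  yields the strong law for bounded independent variables.\<close>

lemma (in prob_space) AE_eventually_deviation_lt:
  fixes X :: "nat \<Rightarrow> 'a \<Rightarrow> real"
  assumes ind: "indep_vars (\<lambda>_. borel) X UNIV"
    and "\<And>i \<omega>. \<omega> \<in> space M \<Longrightarrow> X i \<omega> \<in> {a..b}" and "a < b"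
    and "\<And>i. expectation (X i) = \<mu>"
  shows "AE \<omega> in M. eventually (\<lambda>n. \<bar>(\<Sum>i<n. X i \<omega>) - real n * \<mu>\<bar> < real n / Suc k) sequentially"
proof -
  have [measurable]: "X i \<in> borel_measurable M" for i
    using ind unfolding indep_vars_def by auto
  define A where "A n = {\<omega>\<in>space M. \<bar>(\<Sum>i<n. X i \<omega>) - real n * \<mu>\<bar> \<ge> real n / Suc k}" for n
  have [measurable]: "A n \<in> sets M" for n
    unfolding A_def by measurable
  define q where "q = exp (- 2 / ((real (Suc k))\<^sup>2 * (b - a)\<^sup>2))"
  have "0 \<le> q" "q < 1" unfolding q_def using \<open>a < b\<close> by auto
  then have "summable (\<lambda>n. 2 * q ^ n)"
    by (intro summable_mult summable_geometric) auto
  then have "summable (\<lambda>n. measure M (A n))"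
    by (rule summable_comparison_test'[where N=0])
      (use prob_deviation_le[OF assms] in \<open>simp add: A_def q_def\<close>)
  then have "AE \<omega> in M. eventually (\<lambda>n. \<omega> \<in> space M - A n) sequentially"
    by (intro borel_cantelli_AE1) (auto simp: emeasure_eq_measure)
  then show ?thesis
    by (rule AE_mp) (auto intro!: AE_I2 elim!: eventually_mono simp: A_def)
qed

lemma (in prob_space) strong_law_bounded:
  fixes X :: "nat \<Rightarrow> 'a \<Rightarrow> real"
  assumes "indep_vars (\<lambda>_. borel) X UNIV"
    and "\<And>i \<omega>. \<omega> \<in> space M \<Longrightarrow> X i \<omega> \<in> {a..b}" and "a < b"
    and "\<And>i. expectation (X i) = \<mu>"
  shows "AE \<omega> in M. (\<lambda>n. (\<Sum>i<n. X i \<omega>) / n) \<longlonglongrightarrow> \<mu>"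
proof -
  have "AE \<omega> in M. \<forall>k. eventually (\<lambda>n. \<bar>(\<Sum>i<n. X i \<omega>) - real n * \<mu>\<bar> < real n / Suc k) sequentially"
    using AE_eventually_deviation_lt[OF assms] by (subst AE_all_countable) auto
  then show ?thesis
  proof (rule AE_mp, intro AE_I2 impI)
    fix \<omega> assume dev: "\<forall>k. eventually (\<lambda>n. \<bar>(\<Sum>i<n. X i \<omega>) - real n * \<mu>\<bar> < real n / Suc k) sequentially"
    show "(\<lambda>n. (\<Sum>i<n. X i \<omega>) / n) \<longlonglongrightarrow> \<mu>"
    proof (rule tendstoI)
      fix e :: real assume "e > 0"
      then obtain k where k: "1 / Suc k < e"
        using reals_Archimedean by (auto simp: inverse_eq_divide)
      have "eventually (\<lambda>n. \<bar>(\<Sum>i<n. X i \<omega>) - real n * \<mu>\<bar> < real n / Suc k \<and> n \<ge> 1) sequentially"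
        using dev[rule_format, of k] eventually_ge_at_top[of 1] by (rule eventually_conj)
      then show "eventually (\<lambda>n. dist ((\<Sum>i<n. X i \<omega>) / n) \<mu> < e) sequentially"
      proof (rule eventually_mono)
        fix n assume n: "\<bar>(\<Sum>i<n. X i \<omega>) - real n * \<mu>\<bar> < real n / Suc k \<and> n \<ge> 1"
        then have "dist ((\<Sum>i<n. X i \<omega>) / n) \<mu> = \<bar>(\<Sum>i<n. X i \<omega>) - real n * \<mu>\<bar> / real n"
          by (simp add: dist_real_def field_simps abs_divide)
        also have "\<dots> < 1 / Suc k"
          using n by (simp add: field_simps)
        finally show "dist ((\<Sum>i<n. X i \<omega>) / n) \<mu> < e" using k by linarith
      qed
    qed
  qed
qed

lemma (in prob_space) indep_vars_window_blocks:
  fixes G :: "(nat \<Rightarrow> 'b) \<Rightarrow> real"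
  assumes ind: "indep_vars (\<lambda>_. N) X UNIV"
    and G[measurable]: "G \<in> borel_measurable (PiM {..<m} (\<lambda>_. N))"
    and G_local: "\<And>w w'. (\<And>l. l < m \<Longrightarrow> w l = w' l) \<Longrightarrow> G w = G w'"
  shows "indep_vars (\<lambda>_. borel) (\<lambda>n \<omega>. G (\<lambda>l. X (n * m + q + l) \<omega>)) UNIV"
proof -
  define K where "K n = {n * m + q ..< n * m + q + m}" for n
  have "K n \<inter> K n' = {}" if "n < n'" for n n'
  proof -
    have "Suc n * m \<le> n' * m" using that by (intro mult_le_mono1) simp
    then show ?thesis by (auto simp: K_def)
  qed
  then have "disjoint_family_on K UNIV"
    unfolding disjoint_family_on_def by (metis inf_commute linorder_neqE_nat)
  then have "indep_vars (\<lambda>n. PiM (K n) (\<lambda>_. N)) (\<lambda>n \<omega>. restrict (\<lambda>i. X i \<omega>) (K n)) UNIV"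
    by (intro indep_vars_restrict[OF ind]) auto
  then have "indep_vars (\<lambda>_. borel) (\<lambda>n \<omega>. (\<lambda>v. G (\<lambda>l\<in>{..<m}. v (n * m + q + l))) (restrict (\<lambda>i. X i \<omega>) (K n))) UNIV"
  proof (rule indep_vars_compose2)
    fix n :: nat
    have "(\<lambda>v. \<lambda>l\<in>{..<m}. v (n * m + q + l)) \<in> measurable (PiM (K n) (\<lambda>_. N)) (PiM {..<m} (\<lambda>_. N))"
      by (rule measurable_restrict) (rule measurable_component_singleton, simp add: K_def)
    then show "(\<lambda>v. G (\<lambda>l\<in>{..<m}. v (n * m + q + l))) \<in> borel_measurable (PiM (K n) (\<lambda>_. N))"
      by measurable
  qed
  also have "(\<lambda>n \<omega>. (\<lambda>v. G (\<lambda>l\<in>{..<m}. v (n * m + q + l))) (restrict (\<lambda>i. X i \<omega>) (K n))) =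
      (\<lambda>n \<omega>. G (\<lambda>l. X (n * m + q + l) \<omega>))"
    by (intro ext G_local) (simp add: K_def)
  finally show ?thesis .
qed

lemma (in prob_space) expectation_window:
  fixes G :: "(nat \<Rightarrow> 'b) \<Rightarrow> real"
  assumes ind: "indep_vars (\<lambda>_. N) X UNIV"
    and distr_eq: "\<And>t. distr M N (X t) = \<mu>"
    and "m > 0" and G[measurable]: "G \<in> borel_measurable (PiM {..<m} (\<lambda>_. N))"
    and G_local: "\<And>w w'. (\<And>l. l < m \<Longrightarrow> w l = w' l) \<Longrightarrow> G w = G w'"
  shows "expectation (\<lambda>\<omega>. G (\<lambda>l. X (p + l) \<omega>)) = integral\<^sup>L (PiM {..<m} (\<lambda>_. \<mu>)) G"
proof -
  have [measurable]: "X i \<in> measurable M N" for i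
    using ind unfolding indep_vars_def by auto
  have "indep_vars (\<lambda>l. PiM {p + l} (\<lambda>_. N)) (\<lambda>l \<omega>. restrict (\<lambda>i. X i \<omega>) {p + l}) {..<m}"
    by (rule indep_vars_restrict[OF ind]) (auto simp: disjoint_family_on_def)
  then have "indep_vars (\<lambda>_. N) (\<lambda>l \<omega>. (\<lambda>v. v (p + l)) (restrict (\<lambda>i. X i \<omega>) {p + l})) {..<m}"
    by (rule indep_vars_compose2) (rule measurable_component_singleton, simp)
  then have shifted: "indep_vars (\<lambda>_. N) (\<lambda>l \<omega>. X (p + l) \<omega>) {..<m}"
    by simp
  have "(\<lambda>\<omega>. G (\<lambda>l. X (p + l) \<omega>)) = (\<lambda>\<omega>. G (\<lambda>l\<in>{..<m}. X (p + l) \<omega>))"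
    by (intro ext G_local) simp
  then have "expectation (\<lambda>\<omega>. G (\<lambda>l. X (p + l) \<omega>)) =
      integral\<^sup>L (distr M (PiM {..<m} (\<lambda>_. N)) (\<lambda>\<omega>. \<lambda>l\<in>{..<m}. X (p + l) \<omega>)) G"
    by (simp add: integral_distr)
  also have "distr M (PiM {..<m} (\<lambda>_. N)) (\<lambda>\<omega>. \<lambda>l\<in>{..<m}. X (p + l) \<omega>) =
      PiM {..<m} (\<lambda>l. distr M N (X (p + l)))"
    using indep_vars_iff_distr_eq_PiM[of "{..<m}" "\<lambda>l \<omega>. X (p + l) \<omega>" "\<lambda>_. N"]
      shifted \<open>m > 0\<close> by auto
  finally show ?thesis by (simp add: distr_eq)
qed

section \<open>Growth rates of real sequences\<close>

lemma block_telescope_bound: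
  fixes h D :: "nat \<Rightarrow> real"
  assumes block: "\<And>n. \<bar>h (n * m + q + m) - h (n * m + q) - D n\<bar> \<le> E"
  shows "\<bar>h (N * m + q) - h q - (\<Sum>n<N. D n)\<bar> \<le> real N * E"
proof (induction N)
  case 0 then show ?case by simp
next
  case (Suc N)
  have "Suc N * m + q = N * m + q + m" by simp
  then show ?case using Suc block[of N] by (simp add: algebra_simps)
qed

lemma abs_sum_minus_mean_le:
  fixes D :: "nat \<Rightarrow> real"
  assumes "real N \<le> x"
  shows "\<bar>(\<Sum>n<N. D n) - real N * e\<bar> \<le> x * \<bar>(\<Sum>n<N. D n) / N - e\<bar>"
proof (cases "N = 0")
  case False
  then have "(\<Sum>n<N. D n) - real N * e = real N * ((\<Sum>n<N. D n) / N - e)"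
    by (simp add: field_simps)
  then have "\<bar>(\<Sum>n<N. D n) - real N * e\<bar> = real N * \<bar>(\<Sum>n<N. D n) / N - e\<bar>"
    by (simp add: abs_mult)
  also have "\<dots> \<le> x * \<bar>(\<Sum>n<N. D n) / N - e\<bar>" using assms by (intro mult_right_mono) auto
  finally show ?thesis .
qed (use assms in simp)

lemma block_average_bound:
  fixes h D :: "nat \<Rightarrow> real"
  assumes "m > 0" "q \<le> t" "t > 0"
    and block: "\<And>n. \<bar>h (n * m + q + m) - h (n * m + q) - D n\<bar> \<le> E"
    and incr: "\<And>t d. q \<le> t \<Longrightarrow> \<bar>h (t + d) - h t\<bar> \<le> real d * C"
  defines "N \<equiv> (t - q) div m"
  shows "\<bar>h t / t - e / m\<bar> \<le> E / m +
     ((real m * C + \<bar>h q\<bar> + \<bar>e\<bar> * (real m + q) / m) / t + \<bar>(\<Sum>n<N. D n) / N - e\<bar> / m)"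
proof -
  define j where "j = (t - q) mod m"
  define S where "S = (\<Sum>n<N. D n)"
  have t: "t = N * m + q + j" unfolding N_def j_def using \<open>q \<le> t\<close> by simp
  have "j < m" unfolding j_def using \<open>m > 0\<close> by simp
  have "E \<ge> 0" using block[of 0] by linarith
  have "C \<ge> 0" using incr[of q 1] by simp
  have Nm: "real N * real m \<le> real t" unfolding t by simp
  have c1: "\<bar>h (N * m + q) - h q - S\<bar> \<le> real N * E"
    unfolding S_def by (rule block_telescope_bound[OF block])
  have "\<bar>h t - h (N * m + q)\<bar> \<le> real j * C" unfolding t by (rule incr) simp
  also have "\<dots> \<le> real m * C" using \<open>j < m\<close> \<open>C \<ge> 0\<close> by (intro mult_right_mono) auto
  finally have c2: "\<bar>h t - h (N * m + q)\<bar> \<le> real m * C" .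
  have "real N - real t / m = - (q + real j) / m" unfolding t using \<open>m > 0\<close> by (simp add: field_simps)
  then have "\<bar>real N - real t / m\<bar> \<le> (real m + q) / m"
    using \<open>j < m\<close> \<open>m > 0\<close> by (simp add: abs_divide divide_right_mono)
  then have "\<bar>(real N - real t / m) * e\<bar> \<le> (real m + q) / m * \<bar>e\<bar>"
    unfolding abs_mult by (intro mult_right_mono) auto
  then have c3: "\<bar>(real N - real t / m) * e\<bar> \<le> \<bar>e\<bar> * (real m + q) / m"
    by (simp add: mult.commute)
  have c4: "\<bar>S - real N * e\<bar> \<le> real t / m * \<bar>S / N - e\<bar>"
    unfolding S_def using Nm \<open>m > 0\<close> by (intro abs_sum_minus_mean_le) (simp add: field_simps)
  have c5: "real N * E \<le> real t / m * E"
    using Nm \<open>m > 0\<close> \<open>E \<ge> 0\<close> by (intro mult_right_mono) (auto simp: field_simps)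
  have "h t - real t / m * e = (h t - h (N * m + q)) + (h (N * m + q) - h q - S) + h q
      + (S - real N * e) + (real N - real t / m) * e"
    by (simp add: algebra_simps)
  then have "\<bar>h t - real t / m * e\<bar> \<le>
      real t / m * E + (real m * C + \<bar>h q\<bar> + \<bar>e\<bar> * (real m + q) / m) + real t / m * \<bar>S / N - e\<bar>"
    using c1 c2 c3 c4 c5 by (smt (verit))
  then have "\<bar>h t - real t / m * e\<bar> / t \<le>
      (real t / m * E + (real m * C + \<bar>h q\<bar> + \<bar>e\<bar> * (real m + q) / m) + real t / m * \<bar>S / N - e\<bar>) / t"
    by (simp add: divide_right_mono)
  also have "\<dots> = E / m + ((real m * C + \<bar>h q\<bar> + \<bar>e\<bar> * (real m + q) / m) / t + \<bar>S / N - e\<bar> / m)"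
    using \<open>t > 0\<close> \<open>m > 0\<close> by (simp add: field_simps)
  also have "\<bar>h t - real t / m * e\<bar> / t = \<bar>h t / t - e / m\<bar>"
    using \<open>t > 0\<close> \<open>m > 0\<close> by (simp add: field_simps abs_divide)
  finally show ?thesis unfolding S_def .
qed

lemma filterlim_div_at_top: "(m::nat) > 0 \<Longrightarrow> filterlim (\<lambda>t. (t - q) div m) at_top sequentially"
  unfolding filterlim_at_top
proof (intro allI)
  fix Z :: nat assume "m > 0"
  have "eventually (\<lambda>t. t \<ge> Z * m + q) sequentially" by (rule eventually_ge_at_top)
  then show "eventually (\<lambda>t. Z \<le> (t - q) div m) sequentially"
  proof eventually_elim
    fix t assume "t \<ge> Z * m + q"
    then have "(Z * m) div m \<le> (t - q) div m" by (intro div_le_mono) simp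
    then show "Z \<le> (t - q) div m" using \<open>m > 0\<close> by simp
  qed
qed

lemma block_average_approx:
  fixes h D :: "nat \<Rightarrow> real"
  assumes "m > 0"
    and block: "\<And>n. \<bar>h (n * m + q + m) - h (n * m + q) - D n\<bar> \<le> E"
    and incr: "\<And>t d. q \<le> t \<Longrightarrow> \<bar>h (t + d) - h t\<bar> \<le> real d * C"
    and mean: "(\<lambda>N. (\<Sum>n<N. D n) / N) \<longlonglongrightarrow> e"
    and "\<epsilon> > 0"
  shows "eventually (\<lambda>t. \<bar>h t / t - e / m\<bar> \<le> E / m + \<epsilon>) sequentially"
proof -
  define K where "K = real m * C + \<bar>h q\<bar> + \<bar>e\<bar> * (real m + q) / m"
  define err where "err t = K / t + \<bar>(\<Sum>n<(t - q) div m. D n) / ((t - q) div m) - e\<bar> / m" for t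
  have "(\<lambda>t. K / real t) \<longlonglongrightarrow> 0"
    by (rule tendsto_divide_0[OF tendsto_const filterlim_at_top_imp_at_infinity[OF filterlim_real_sequentially]])
  moreover have "(\<lambda>t. (\<Sum>n<(t - q) div m. D n) / ((t - q) div m)) \<longlonglongrightarrow> e"
    using mean filterlim_div_at_top[OF \<open>m > 0\<close>] by (rule filterlim_compose)
  then have "(\<lambda>t. \<bar>(\<Sum>n<(t - q) div m. D n) / ((t - q) div m) - e\<bar> / m) \<longlonglongrightarrow> \<bar>e - e\<bar> / m"
    using \<open>m > 0\<close> by (intro tendsto_intros) auto
  ultimately have "err \<longlonglongrightarrow> 0 + 0"
    unfolding err_def by (intro tendsto_add) auto
  then have "eventually (\<lambda>t. err t < \<epsilon>) sequentially"
    using \<open>\<epsilon> > 0\<close> by (simp add: order_tendstoD(2))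
  moreover have "eventually (\<lambda>t. \<bar>h t / t - e / m\<bar> \<le> E / m + err t) sequentially"
    using eventually_ge_at_top[of "max q 1"]
  proof eventually_elim
    case (elim t)
    then have "q \<le> t" "t > 0" by auto
    from block_average_bound[OF \<open>m > 0\<close> this block incr]
    show ?case unfolding err_def K_def .
  qed
  ultimately show ?thesis by eventually_elim simp
qed

lemma approximants_dist:
  fixes u a c :: "nat \<Rightarrow> real"
  assumes approx: "\<And>k \<epsilon>. \<epsilon> > 0 \<Longrightarrow> eventually (\<lambda>t. \<bar>u t - a k\<bar> \<le> c k + \<epsilon>) sequentially"
  shows "\<bar>a k - a k'\<bar> \<le> c k + c k'"
proof (rule field_le_epsilon)
  fix \<epsilon> :: real assume "\<epsilon> > 0"
  then have "eventually (\<lambda>t. \<bar>u t - a k\<bar> \<le> c k + \<epsilon> / 2 \<and> \<bar>u t - a k'\<bar> \<le> c k' + \<epsilon> / 2) sequentially"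
    by (intro eventually_conj approx) auto
  then obtain t where "\<bar>u t - a k\<bar> \<le> c k + \<epsilon> / 2" "\<bar>u t - a k'\<bar> \<le> c k' + \<epsilon> / 2"
    using eventually_happens'[OF trivial_limit_sequentially] by blast
  then show "\<bar>a k - a k'\<bar> \<le> c k + c k' + \<epsilon>" by linarith
qed

lemma convergent_approximants:
  fixes u a c :: "nat \<Rightarrow> real"
  assumes "c \<longlonglongrightarrow> 0"
    and approx: "\<And>k \<epsilon>. \<epsilon> > 0 \<Longrightarrow> eventually (\<lambda>t. \<bar>u t - a k\<bar> \<le> c k + \<epsilon>) sequentially"
  shows "convergent a"
proof -
  have "Cauchy a"
  proof (rule CauchyI)
    fix \<epsilon> :: real assume "\<epsilon> > 0"
    then have "eventually (\<lambda>k. \<bar>c k\<bar> < \<epsilon> / 2) sequentially"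
      using tendstoD[OF \<open>c \<longlonglongrightarrow> 0\<close>, of "\<epsilon> / 2"] by (simp add: dist_real_def)
    then obtain K where K: "\<And>k. k \<ge> K \<Longrightarrow> \<bar>c k\<bar> < \<epsilon> / 2"
      by (auto simp: eventually_sequentially)
    have "norm (a k - a k') < \<epsilon>" if "k \<ge> K" "k' \<ge> K" for k k'
      using approximants_dist[of u a c k k', OF approx] K[OF that(1)] K[OF that(2)] by simp
    then show "\<exists>M. \<forall>m\<ge>M. \<forall>n\<ge>M. norm (a m - a n) < \<epsilon>" by blast
  qed
  then show ?thesis by (simp add: Cauchy_convergent_iff)
qed

lemma tendsto_of_approximants:
  fixes u a c :: "nat \<Rightarrow> real"
  assumes "c \<longlonglongrightarrow> 0" "a \<longlonglongrightarrow> L"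
    and approx: "\<And>k \<epsilon>. \<epsilon> > 0 \<Longrightarrow> eventually (\<lambda>t. \<bar>u t - a k\<bar> \<le> c k + \<epsilon>) sequentially"
  shows "u \<longlonglongrightarrow> L"
proof (rule tendstoI)
  fix \<epsilon> :: real assume "\<epsilon> > 0"
  have "eventually (\<lambda>k. dist (c k) 0 < \<epsilon> / 3 \<and> dist (a k) L < \<epsilon> / 3) sequentially"
    using assms(1,2) \<open>\<epsilon> > 0\<close> by (intro eventually_conj tendstoD) auto
  then obtain k where k: "\<bar>c k\<bar> < \<epsilon> / 3" "\<bar>a k - L\<bar> < \<epsilon> / 3"
    using eventually_happens'[OF trivial_limit_sequentially] by (auto simp: dist_real_def)
  have "eventually (\<lambda>t. \<bar>u t - a k\<bar> \<le> c k + \<epsilon> / 3) sequentially"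
    using \<open>\<epsilon> > 0\<close> by (intro approx) simp
  then show "eventually (\<lambda>t. dist (u t) L < \<epsilon>) sequentially"
    by eventually_elim (use k in \<open>simp add: dist_real_def; linarith\<close>)
qed

lemma filterlim_at_top_of_log_rate:
  fixes g :: "nat \<Rightarrow> real"
  assumes rate: "(\<lambda>t. ln (g t) / real t) \<longlonglongrightarrow> L" and "L > 0"
    and pos: "eventually (\<lambda>t. g t > 0) sequentially"
  shows "filterlim g at_top sequentially"
proof -
  have "filterlim (\<lambda>t. ln (g t) / real t * real t) at_top sequentially"
    by (rule filterlim_tendsto_pos_mult_at_top[OF rate \<open>L > 0\<close> filterlim_real_sequentially])
  then have "filterlim (\<lambda>t. exp (ln (g t) / real t * real t)) at_top sequentially"
    by (rule filterlim_compose[OF exp_at_top])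
  moreover have "eventually (\<lambda>t. exp (ln (g t) / real t * real t) = g t) sequentially"
    using pos eventually_gt_at_top[of 0] by eventually_elim simp
  ultimately show ?thesis
    by (rule filterlim_cong[OF refl refl, THEN iffD1, rotated])
qed

lemma growth_rate_pos_of_small_loss:
  fixes \<rho> \<pi> F \<Delta> :: real
  assumes "\<rho> > 0" "\<pi> < 1" "F > 0"
    and small: "\<Delta> < F * (1 - \<rho> powr (1 / (\<pi> - 1)))"
  shows "ln \<rho> + (1 - \<pi>) * ln (1 - \<Delta> / F) > 0"
proof -
  define Q where "Q = \<rho> powr (1 / (\<pi> - 1))"
  have "Q > 0" unfolding Q_def using \<open>\<rho> > 0\<close> by simp
  moreover have "Q < 1 - \<Delta> / F"
    using small \<open>F > 0\<close> unfolding Q_def by (simp add: field_simps)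
  ultimately have "ln Q < ln (1 - \<Delta> / F)" by simp
  moreover have "ln Q = ln \<rho> / (\<pi> - 1)" unfolding Q_def using \<open>\<rho> > 0\<close> by (simp add: ln_powr)
  ultimately have "(1 - \<pi>) * (ln \<rho> / (\<pi> - 1)) < (1 - \<pi>) * ln (1 - \<Delta> / F)"
    using \<open>\<pi> < 1\<close> by (intro mult_strict_left_mono) auto
  moreover have "(1 - \<pi>) * (ln \<rho> / (\<pi> - 1)) = - ln \<rho>"
    using \<open>\<pi> < 1\<close> by (simp add: field_simps)
  ultimately show ?thesis by linarith
qed

section \<open>The growth-ratio recursion\<close>

locale two_env_leslie =
  fixes f F s \<Delta> :: real
  assumes f_pos: "f > 0" and F_pos: "F > 0" and s_pos: "s > 0"
    and \<Delta>_pos: "\<Delta> > 0" and \<Delta>_less: "\<Delta> < F"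
begin

definition fec :: "nat \<Rightarrow> real" where
  "fec k = (if k = 1 then F else F - \<Delta>)"

definition env_matrix :: "nat \<Rightarrow> real^2^2" where
  "env_matrix k = leslie2 f (fec k) s"

lemma fec_pos: "fec k > 0" and fec_le: "fec k \<le> F"
  using F_pos \<Delta>_pos \<Delta>_less by (auto simp: fec_def)

text \<open>If the class-1 abundance grew by the factor \<open>x\<close> in the last step, it grows by
  \<open>ratio_map k x\<close> in the next step when environment \<open>k\<close> occurs, since
  \<open>z\<^sub>1(t+1) = f z\<^sub>1(t) + s fec(k) z\<^sub>1(t-1)\<close>.\<close>

definition ratio_map :: "nat \<Rightarrow> real \<Rightarrow> real" where
  "ratio_map k x = f + s * fec k / x"

definition "ratio_max = f + s * F / f"

definition "contraction_const = s * F / (f\<^sup>2 + s * F)"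

lemma f_less_ratio_max: "f < ratio_max"
  using f_pos F_pos s_pos by (simp add: ratio_max_def)

lemma ratio_map_bounds:
  assumes "f \<le> x"
  shows "f \<le> ratio_map k x" "ratio_map k x \<le> ratio_max"
proof -
  have "x > 0" using assms f_pos by simp
  then show "f \<le> ratio_map k x" using s_pos fec_pos[of k] by (simp add: ratio_map_def)
  have "s * fec k / x \<le> s * F / x" using \<open>x > 0\<close> s_pos fec_le[of k] by (simp add: divide_right_mono)
  also have "\<dots> \<le> s * F / f" using \<open>x > 0\<close> s_pos F_pos assms f_pos by (simp add: frac_le)
  finally show "ratio_map k x \<le> ratio_max" by (simp add: ratio_map_def ratio_max_def)
qed

lemma ratio_map_antimono: "f \<le> x \<Longrightarrow> x \<le> y \<Longrightarrow> ratio_map k y \<le> ratio_map k x"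
  using f_pos s_pos fec_pos[of k] unfolding ratio_map_def by (simp add: frac_le)

lemma contraction_const_bounds: "0 < contraction_const" "contraction_const < 1"
  using f_pos s_pos F_pos by (simp_all add: contraction_const_def add_pos_pos)

lemma fec_share_le_contraction_const:
  assumes "0 < c" "c \<le> s * F" "f \<le> u"
  shows "c / (f * u + c) \<le> contraction_const"
proof -
  have "c / (f * u + c) \<le> c / (f * f + c)"
    using assms f_pos by (intro divide_left_mono add_pos_pos mult_pos_pos mult_left_mono add_right_mono) auto
  also have "\<dots> \<le> s * F / (f * f + s * F)"
  proof -
    have "c * (f * f) \<le> s * F * (f * f)" using assms by (intro mult_right_mono) auto
    moreover have "f * f + c > 0" "f * f + s * F > 0" using assms f_pos by (simp_all add: add_pos_pos)
    ultimately show ?thesis by (simp add: field_simps)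
  qed
  finally show ?thesis by (simp add: contraction_const_def power2_eq_square)
qed

lemma ln_ratio_map_plus_mono:
  assumes "f \<le> x" "x \<le> y"
  shows "ln (ratio_map k x) + contraction_const * ln x \<le> ln (ratio_map k y) + contraction_const * ln y"
proof -
  define c where "c = s * fec k"
  have c: "c > 0" "c \<le> s * F" using s_pos fec_pos[of k] fec_le[of k] by (auto simp: c_def)
  define h where "h u = ln (f + c / u) + contraction_const * ln u" for u
  have "h x \<le> h y"
  proof (rule DERIV_nonneg_imp_nondecreasing[OF assms(2)])
    fix u assume "x \<le> u" "u \<le> y"
    then have "u > 0" "f \<le> u" using assms f_pos by auto
    have "f * u + c > 0" using f_pos c \<open>u > 0\<close> by (intro add_pos_pos) auto
    have "f + c / u > 0" using f_pos c \<open>u > 0\<close> by (intro add_pos_pos) auto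
    have D: "(h has_real_derivative (- c / u\<^sup>2) / (f + c / u) + contraction_const * (1 / u)) (at u)"
      unfolding h_def using \<open>u > 0\<close> \<open>f + c / u > 0\<close>
      by (auto intro!: derivative_eq_intros simp: power2_eq_square field_simps)
    have "f + c / u = (f * u + c) / u" using \<open>u > 0\<close> by (simp add: field_simps)
    then have "(- c / u\<^sup>2) / (f + c / u) = - c / (u * (f * u + c))"
      using \<open>u > 0\<close> \<open>f * u + c > 0\<close> by (simp add: field_simps power2_eq_square)
    moreover have "contraction_const * (1 / u) = contraction_const * (f * u + c) / (u * (f * u + c))"
      using \<open>f * u + c > 0\<close> by simp
    ultimately
    have "(- c / u\<^sup>2) / (f + c / u) + contraction_const * (1 / u)
        = - c / (u * (f * u + c)) + contraction_const * (f * u + c) / (u * (f * u + c))"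
      by simp
    also have "\<dots> = (contraction_const * (f * u + c) - c) / (u * (f * u + c))"
      by (simp add: diff_divide_distrib)
    also have "\<dots> \<ge> 0"
      using fec_share_le_contraction_const[OF c \<open>f \<le> u\<close>] \<open>u > 0\<close> \<open>f * u + c > 0\<close>
      by (simp add: divide_le_eq)
    finally show "\<exists>d. (h has_real_derivative d) (at u) \<and> 0 \<le> d"
      using D by blast
  qed
  then show ?thesis by (simp add: h_def ratio_map_def c_def)
qed

lemma ln_ratio_map_contraction:
  assumes "f \<le> x" "f \<le> y"
  shows "\<bar>ln (ratio_map k x) - ln (ratio_map k y)\<bar> \<le> contraction_const * \<bar>ln x - ln y\<bar>"
proof -
  have *: "\<bar>ln (ratio_map k x) - ln (ratio_map k y)\<bar> \<le> contraction_const * \<bar>ln x - ln y\<bar>"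
    if "f \<le> x" "x \<le> y" for x y
  proof -
    have "ln (ratio_map k y) \<le> ln (ratio_map k x)"
      using ratio_map_antimono[OF that, of k] ratio_map_bounds(1)[of y k] that f_pos by simp
    moreover have "ln x \<le> ln y" using that f_pos by simp
    ultimately show ?thesis
      using ln_ratio_map_plus_mono[OF that, of k] contraction_const_bounds
      by (simp add: right_diff_distrib)
  qed
  show ?thesis
    using *[of x y] *[of y x] assms by (cases "x \<le> y") (auto simp: abs_minus_commute)
qed

text \<open>The growth ratio of class 1 restarted from \<open>f\<close> and driven by the environments \<open>w 0, w 1, \<dots>\<close>;
  by the contraction above it forgets its starting value geometrically fast.\<close>

primrec ratio_seq :: "(nat \<Rightarrow> nat) \<Rightarrow> nat \<Rightarrow> real" where
  "ratio_seq w 0 = f"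
| "ratio_seq w (Suc l) = ratio_map (w l) (ratio_seq w l)"

lemma ratio_seq_bounds: "f \<le> ratio_seq w l" "ratio_seq w l \<le> ratio_max"
  by (induction l) (auto intro: ratio_map_bounds simp: f_less_ratio_max less_imp_le)

lemma ratio_seq_cong: "(\<And>j. j < l \<Longrightarrow> w j = w' j) \<Longrightarrow> ratio_seq w l = ratio_seq w' l"
  by (induction l) auto

definition block_growth :: "(nat \<Rightarrow> nat) \<Rightarrow> nat \<Rightarrow> real" where
  "block_growth w m = (\<Sum>l<m. ln (ratio_seq w (Suc l)))"

lemma block_growth_cong: "(\<And>j. j < m \<Longrightarrow> w j = w' j) \<Longrightarrow> block_growth w m = block_growth w' m"
  unfolding block_growth_def by (intro sum.cong refl arg_cong[where f=ln] ratio_seq_cong) auto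

lemma block_growth_bounds: "block_growth w m \<in> {real m * ln f .. real m * ln ratio_max}"
proof -
  have "ln f \<le> ln (ratio_seq w (Suc l))" "ln (ratio_seq w (Suc l)) \<le> ln ratio_max" for l
    using ratio_seq_bounds[of w "Suc l"] f_pos by auto
  then show ?thesis
    using sum_bounded_below[of "{..<m}" "ln f" "\<lambda>l. ln (ratio_seq w (Suc l))"]
      sum_bounded_above[of "{..<m}" "\<lambda>l. ln (ratio_seq w (Suc l))" "ln ratio_max"]
    by (simp add: block_growth_def)
qed

definition "block_error = (ln ratio_max - ln f) / (1 - contraction_const)"

definition "log_ratio_bound = \<bar>ln f\<bar> + \<bar>ln ratio_max\<bar>"

definition "perron_root = (f + sqrt (f\<^sup>2 + 4 * s * F)) / 2"

lemma perron_root_pos: "perron_root > 0"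
  and perron_root_eq: "perron_root * perron_root = f * perron_root + s * F"
proof -
  have "f\<^sup>2 + 4 * s * F > 0" using f_pos s_pos F_pos by (simp add: add_pos_pos)
  then have q: "(sqrt (f\<^sup>2 + 4 * s * F))\<^sup>2 = f\<^sup>2 + 4 * s * F" "sqrt (f\<^sup>2 + 4 * s * F) \<ge> 0"
    by simp_all
  show "perron_root > 0" unfolding perron_root_def using add_pos_nonneg[OF f_pos q(2)] by simp
  show "perron_root * perron_root = f * perron_root + s * F" unfolding perron_root_def using q(1)
    by (simp add: algebra_simps power2_eq_square field_simps)
qed

definition "loss = 1 - \<Delta> / F"

lemma loss_pos: "loss > 0" and loss_le_1: "loss \<le> 1" and loss_mult_F: "loss * F = F - \<Delta>"
  using F_pos \<Delta>_pos \<Delta>_less by (auto simp: loss_def field_simps)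

end

section \<open>Population trajectories\<close>

context two_env_leslie
begin

context
  fixes \<tau> :: "nat \<Rightarrow> 'w \<Rightarrow> nat" and z0 :: "real^2" and \<omega> :: 'w
  assumes z0_nonneg: "\<forall>i. z0 $ i \<ge> 0" and z0_nonzero: "z0 \<noteq> 0"
begin

abbreviation z1 :: "nat \<Rightarrow> real" where "z1 t \<equiv> pop env_matrix \<tau> z0 t \<omega> $ 1"
abbreviation z2 :: "nat \<Rightarrow> real" where "z2 t \<equiv> pop env_matrix \<tau> z0 t \<omega> $ 2"

lemma z1_Suc: "z1 (Suc t) = f * z1 t + fec (\<tau> (Suc t) \<omega>) * z2 t"
  and z2_Suc: "z2 (Suc t) = s * z1 t"
  by (simp_all add: env_matrix_def leslie2_mult_vec)

declare pop.simps(2)[simp del]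

lemma z0_pos_component: "z0 $ 1 > 0 \<or> z0 $ 2 > 0"
proof -
  obtain i where "z0 $ i \<noteq> 0" using z0_nonzero by (auto simp: vec_eq_iff)
  then show ?thesis using z0_nonneg exhaust_2[of i] by (metis order_le_less)
qed

lemma pop_nonneg: "z1 t \<ge> 0 \<and> z2 t \<ge> 0"
proof (induction t)
  case (Suc t)
  then show ?case using f_pos s_pos fec_pos[of "\<tau> (Suc t) \<omega>"] by (simp add: z1_Suc z2_Suc)
qed (use z0_nonneg in simp)

lemma z1_Suc_ge: "f * z1 t \<le> z1 (Suc t)"
  using pop_nonneg[of t] fec_pos[of "\<tau> (Suc t) \<omega>"] by (simp add: z1_Suc)

lemma z1_pos: "t \<ge> 1 \<Longrightarrow> z1 t > 0"
proof (induction t rule: dec_induct)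
  case base
  have "z1 1 = f * z0 $ 1 + fec (\<tau> 1 \<omega>) * z0 $ 2" using z1_Suc[of 0] by simp
  then show ?case
    using z0_pos_component z0_nonneg f_pos fec_pos[of "\<tau> 1 \<omega>"]
    by (auto intro: add_pos_nonneg add_nonneg_pos)
next
  case (step t)
  then show ?case using z1_Suc_ge[of t] f_pos by (meson less_le_trans mult_pos_pos)
qed

lemma norm1_pop: "norm1 (pop env_matrix \<tau> z0 t \<omega>) = z1 t + z2 t"
  using pop_nonneg[of t] by (simp add: norm1_def sum_2)

lemma norm1_pop_pos: "t \<ge> 1 \<Longrightarrow> norm1 (pop env_matrix \<tau> z0 t \<omega>) > 0"
  using norm1_pop[of t] z1_pos[of t] pop_nonneg[of t] by simp

lemma norm1_pop_le: "t \<ge> 1 \<Longrightarrow> norm1 (pop env_matrix \<tau> z0 t \<omega>) \<le> (1 + s / f) * z1 t"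
proof -
  assume "t \<ge> 1"
  then obtain n where t: "t = Suc n" by (cases t) auto
  have "z2 t = (s / f) * (f * z1 n)" using f_pos by (simp add: t z2_Suc)
  also have "\<dots> \<le> (s / f) * z1 t" using z1_Suc_ge[of n] f_pos s_pos t by (intro mult_left_mono) auto
  finally show ?thesis using norm1_pop[of t] by (simp add: algebra_simps)
qed

lemma ln_norm1_pop_minus_ln_z1_rate: "(\<lambda>t. ln (norm1 (pop env_matrix \<tau> z0 t \<omega>)) / t - ln (z1 t) / t) \<longlonglongrightarrow> 0"
proof (rule Lim_null_comparison)
  show "eventually (\<lambda>t. norm (ln (norm1 (pop env_matrix \<tau> z0 t \<omega>)) / t - ln (z1 t) / t) \<le> ln (1 + s / f) / t) sequentially"
    using eventually_ge_at_top[of 1]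
  proof eventually_elim
    fix t :: nat assume "t \<ge> 1"
    have "1 + s / f > 0" using s_pos f_pos by (simp add: add_pos_pos)
    have "z1 t \<le> norm1 (pop env_matrix \<tau> z0 t \<omega>)" using norm1_pop[of t] pop_nonneg[of t] by simp
    then have "ln (z1 t) \<le> ln (norm1 (pop env_matrix \<tau> z0 t \<omega>))"
      using z1_pos[OF \<open>t \<ge> 1\<close>] by simp
    moreover have "ln (norm1 (pop env_matrix \<tau> z0 t \<omega>)) \<le> ln ((1 + s / f) * z1 t)"
      using norm1_pop_le[OF \<open>t \<ge> 1\<close>] z1_pos[OF \<open>t \<ge> 1\<close>] \<open>1 + s / f > 0\<close>
        \<open>z1 t \<le> norm1 (pop env_matrix \<tau> z0 t \<omega>)\<close> by simp
    moreover have "ln ((1 + s / f) * z1 t) = ln (1 + s / f) + ln (z1 t)"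
      using z1_pos[OF \<open>t \<ge> 1\<close>] \<open>1 + s / f > 0\<close> by (simp add: ln_mult)
    ultimately show "norm (ln (norm1 (pop env_matrix \<tau> z0 t \<omega>)) / t - ln (z1 t) / t) \<le> ln (1 + s / f) / t"
      using \<open>t \<ge> 1\<close> by (simp add: abs_divide divide_right_mono flip: diff_divide_distrib)
  qed
  show "(\<lambda>t. ln (1 + s / f) / real t) \<longlonglongrightarrow> 0"
    by (rule tendsto_divide_0[OF tendsto_const filterlim_at_top_imp_at_infinity[OF filterlim_real_sequentially]])
qed

abbreviation growth_ratio :: "nat \<Rightarrow> real" where "growth_ratio t \<equiv> z1 t / z1 (t - 1)"

lemma growth_ratio_bounds:
  assumes "t \<ge> 2"
  shows "f \<le> growth_ratio t \<and> growth_ratio t \<le> ratio_max"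
proof -
  obtain n where t: "t = Suc (Suc n)" using assms by (metis add_2_eq_Suc le_Suc_ex)
  have "z1 (Suc n) > 0" using z1_pos by simp
  have "0 \<le> fec (\<tau> t \<omega>) * s * z1 n"
    using fec_pos[of "\<tau> t \<omega>"] s_pos pop_nonneg[of n] by simp
  have "fec (\<tau> t \<omega>) * s * z1 n \<le> (s * F / f) * (f * z1 n)"
    using fec_le[of "\<tau> t \<omega>"] s_pos pop_nonneg[of n] f_pos by (simp add: mult_right_mono)
  also have "\<dots> \<le> (s * F / f) * z1 (Suc n)"
    using z1_Suc_ge[of n] f_pos s_pos F_pos by (intro mult_left_mono) auto
  finally have "fec (\<tau> t \<omega>) * s * z1 n / z1 (Suc n) \<le> s * F / f"
    using \<open>z1 (Suc n) > 0\<close> by (simp add: divide_le_eq)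
  moreover have "growth_ratio t = f + fec (\<tau> t \<omega>) * s * z1 n / z1 (Suc n)"
    using \<open>z1 (Suc n) > 0\<close> by (simp add: t z1_Suc z2_Suc field_simps)
  moreover have "0 \<le> fec (\<tau> t \<omega>) * s * z1 n / z1 (Suc n)"
    using \<open>0 \<le> fec (\<tau> t \<omega>) * s * z1 n\<close> \<open>z1 (Suc n) > 0\<close> by simp
  ultimately show ?thesis by (simp add: ratio_max_def)
qed

lemma growth_ratio_Suc: "t \<ge> 2 \<Longrightarrow> growth_ratio (Suc t) = ratio_map (\<tau> (Suc t) \<omega>) (growth_ratio t)"
proof -
  assume "t \<ge> 2"
  then obtain n where t: "t = Suc (Suc n)" by (metis add_2_eq_Suc le_Suc_ex)
  have "z1 (Suc n) > 0" "z1 t > 0" using z1_pos t by auto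
  moreover have "z1 (Suc t) = f * z1 t + fec (\<tau> (Suc t) \<omega>) * s * z1 (Suc n)"
    by (simp add: t z1_Suc z2_Suc)
  ultimately show ?thesis by (simp add: t ratio_map_def field_simps)
qed

lemma ln_growth_ratio_close:
  assumes "p \<ge> 2"
  shows "\<bar>ln (growth_ratio (p + l)) - ln (ratio_seq (\<lambda>j. \<tau> (p + 1 + j) \<omega>) l)\<bar>
    \<le> contraction_const ^ l * (ln ratio_max - ln f)"
proof (induction l)
  case 0
  then show ?case using growth_ratio_bounds[OF assms] f_pos by auto
next
  case (Suc l)
  let ?w = "\<lambda>j. \<tau> (p + 1 + j) \<omega>"
  have "growth_ratio (p + Suc l) = ratio_map (?w l) (growth_ratio (p + l))"
    using growth_ratio_Suc[of "p + l"] assms by simp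
  moreover have "f \<le> growth_ratio (p + l)" using growth_ratio_bounds[of "p + l"] assms by simp
  ultimately have "\<bar>ln (growth_ratio (p + Suc l)) - ln (ratio_seq ?w (Suc l))\<bar>
      \<le> contraction_const * \<bar>ln (growth_ratio (p + l)) - ln (ratio_seq ?w l)\<bar>"
    using ln_ratio_map_contraction ratio_seq_bounds(1) by simp
  also have "\<dots> \<le> contraction_const * (contraction_const ^ l * (ln ratio_max - ln f))"
    using Suc contraction_const_bounds by (intro mult_left_mono) auto
  finally show ?case by simp
qed

lemma ln_z1_telescope:
  "p \<ge> 1 \<Longrightarrow> ln (z1 (p + m)) - ln (z1 p) = (\<Sum>l<m. ln (growth_ratio (p + Suc l)))"
proof (induction m)
  case (Suc m)
  have "z1 (p + m) > 0" "z1 (p + Suc m) > 0" using z1_pos Suc.prems by auto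
  then have "ln (growth_ratio (p + Suc m)) = ln (z1 (p + Suc m)) - ln (z1 (p + m))"
    by (simp add: ln_div)
  then show ?case using Suc by simp
qed simp

lemma ln_z1_block_bound:
  assumes "p \<ge> 2"
  shows "\<bar>ln (z1 (p + m)) - ln (z1 p) - block_growth (\<lambda>j. \<tau> (p + 1 + j) \<omega>) m\<bar> \<le> block_error"
proof -
  let ?w = "\<lambda>j. \<tau> (p + 1 + j) \<omega>"
  let ?B = "ln ratio_max - ln f"
  have "?B \<ge> 0" using f_less_ratio_max f_pos by simp
  have "\<bar>ln (z1 (p + m)) - ln (z1 p) - block_growth ?w m\<bar>
      = \<bar>\<Sum>l<m. ln (growth_ratio (p + Suc l)) - ln (ratio_seq ?w (Suc l))\<bar>"
    using ln_z1_telescope[of p m] assms by (simp add: block_growth_def sum_subtractf)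
  also have "\<dots> \<le> (\<Sum>l<m. contraction_const ^ l * ?B)"
  proof (rule order_trans[OF sum_abs sum_mono])
    fix l
    have "\<bar>ln (growth_ratio (p + Suc l)) - ln (ratio_seq ?w (Suc l))\<bar> \<le> contraction_const ^ Suc l * ?B"
      by (rule ln_growth_ratio_close[OF assms])
    also have "\<dots> \<le> contraction_const ^ l * ?B"
      using contraction_const_bounds \<open>?B \<ge> 0\<close> by (intro mult_right_mono power_decreasing) auto
    finally show "\<bar>ln (growth_ratio (p + Suc l)) - ln (ratio_seq ?w (Suc l))\<bar> \<le> contraction_const ^ l * ?B" .
  qed
  also have "\<dots> = ?B * ((1 - contraction_const ^ m) / (1 - contraction_const))"
    using contraction_const_bounds
    by (simp add: sum_distrib_right[symmetric] sum_gp_strict mult.commute)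
  also have "\<dots> \<le> ?B * (1 / (1 - contraction_const))"
    using contraction_const_bounds \<open>?B \<ge> 0\<close> by (intro mult_left_mono divide_right_mono) auto
  finally show ?thesis by (simp add: block_error_def)
qed

lemma ln_z1_increment_bound: "t \<ge> 1 \<Longrightarrow> \<bar>ln (z1 (t + d)) - ln (z1 t)\<bar> \<le> real d * log_ratio_bound"
proof -
  assume "t \<ge> 1"
  have "\<bar>ln (z1 (t + d)) - ln (z1 t)\<bar> \<le> (\<Sum>l<d. \<bar>ln (growth_ratio (t + Suc l))\<bar>)"
    using ln_z1_telescope[OF \<open>t \<ge> 1\<close>] by (simp add: sum_abs)
  also have "\<dots> \<le> (\<Sum>l<d. log_ratio_bound)"
  proof (rule sum_mono)
    fix l
    have "f \<le> growth_ratio (t + Suc l)" "growth_ratio (t + Suc l) \<le> ratio_max"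
      using growth_ratio_bounds[of "t + Suc l"] \<open>t \<ge> 1\<close> by auto
    then have "ln f \<le> ln (growth_ratio (t + Suc l))" "ln (growth_ratio (t + Suc l)) \<le> ln ratio_max"
      using f_pos by auto
    then show "\<bar>ln (growth_ratio (t + Suc l))\<bar> \<le> log_ratio_bound"
      unfolding log_ratio_bound_def by linarith
  qed
  finally show ?thesis by simp
qed

text \<open>\<open>(perron_root, F)\<close> is a left Perron vector of \<open>A\<^sub>1\<close>.\<close>

abbreviation lyap :: "nat \<Rightarrow> real" where "lyap t \<equiv> perron_root * z1 t + F * z2 t"

lemma lyap_Suc_ge:
  "lyap (Suc t) \<ge> perron_root * (if \<tau> (Suc t) \<omega> = 1 then 1 else loss) * lyap t"
proof -
  have eq: "lyap (Suc t) = perron_root * perron_root * z1 t + perron_root * fec (\<tau> (Suc t) \<omega>) * z2 t"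
    unfolding z1_Suc z2_Suc perron_root_eq by (simp add: algebra_simps)
  show ?thesis
  proof (cases "\<tau> (Suc t) \<omega> = 1")
    case True
    then show ?thesis by (subst eq) (simp add: fec_def algebra_simps)
  next
    case False
    then have "fec (\<tau> (Suc t) \<omega>) = loss * F" using loss_mult_F by (simp add: fec_def)
    moreover have "loss * (perron_root * perron_root * z1 t) \<le> perron_root * perron_root * z1 t"
      using loss_pos loss_le_1 pop_nonneg[of t] perron_root_pos
      by (intro mult_left_le_one_le) auto
    ultimately show ?thesis using False by (subst eq) (simp add: algebra_simps)
  qed
qed

abbreviation bad_count :: "nat \<Rightarrow> real" where
  "bad_count t \<equiv> \<Sum>i<t. if \<tau> (Suc i) \<omega> = 1 then 0 else 1"

lemma lyap_pos_ln_ge: "lyap t > 0 \<and> ln (lyap 0) + real t * ln perron_root + bad_count t * ln loss \<le> ln (lyap t)"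
proof (induction t)
  case 0
  then show ?case using z0_pos_component z0_nonneg perron_root_pos F_pos
    by (auto intro: add_pos_nonneg add_nonneg_pos)
next
  case (Suc t)
  define k where "k = (if \<tau> (Suc t) \<omega> = 1 then 1 else loss)"
  have "k > 0" "ln k = (if \<tau> (Suc t) \<omega> = 1 then 0 else 1) * ln loss"
    using loss_pos by (auto simp: k_def)
  have pos: "0 < perron_root * k * lyap t" using Suc \<open>k > 0\<close> perron_root_pos by simp
  have le: "perron_root * k * lyap t \<le> lyap (Suc t)" using lyap_Suc_ge[of t] by (simp add: k_def)
  have "ln (perron_root * k * lyap t) = ln perron_root + ln k + ln (lyap t)"
    using \<open>k > 0\<close> perron_root_pos Suc by (simp add: ln_mult)
  moreover have "ln (perron_root * k * lyap t) \<le> ln (lyap (Suc t))" using pos le by simp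
  moreover have "bad_count (Suc t) * ln loss = bad_count t * ln loss + ln k"
    using \<open>ln k = _\<close> by (simp add: algebra_simps)
  ultimately show ?case
    using Suc pos le unfolding of_nat_Suc distrib_right by linarith
qed

lemma ln_norm1_pop_ge:
  obtains C where "\<And>t. C + real t * ln perron_root + bad_count t * ln loss
    \<le> ln (norm1 (pop env_matrix \<tau> z0 t \<omega>))"
proof
  fix t
  have "perron_root + F > 0" using perron_root_pos F_pos by simp
  have "lyap t \<le> (perron_root + F) * norm1 (pop env_matrix \<tau> z0 t \<omega>)"
    unfolding norm1_pop using pop_nonneg[of t] perron_root_pos F_pos
    by (simp add: algebra_simps add_mono mult_left_mono)
  moreover have "lyap t > 0" using lyap_pos_ln_ge[of t] by simp
  ultimately have "norm1 (pop env_matrix \<tau> z0 t \<omega>) > 0"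
    using \<open>perron_root + F > 0\<close> by (metis order_less_le_trans zero_less_mult_pos)
  have "ln (lyap t) \<le> ln ((perron_root + F) * norm1 (pop env_matrix \<tau> z0 t \<omega>))"
    using \<open>lyap t \<le> _\<close> \<open>lyap t > 0\<close> by simp
  also have "\<dots> = ln (perron_root + F) + ln (norm1 (pop env_matrix \<tau> z0 t \<omega>))"
    using \<open>perron_root + F > 0\<close> \<open>norm1 (pop env_matrix \<tau> z0 t \<omega>) > 0\<close> by (simp add: ln_mult)
  finally show "ln (lyap 0) - ln (perron_root + F) + real t * ln perron_root + bad_count t * ln loss
      \<le> ln (norm1 (pop env_matrix \<tau> z0 t \<omega>))"
    using lyap_pos_ln_ge[of t] by linarith
qed

end

end

section \<open>Independent environments\<close>

locale two_env_leslie_iid = two_env_leslie + prob_space +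
  fixes \<tau> :: "nat \<Rightarrow> 'a \<Rightarrow> nat" and \<pi>1 :: real
  assumes env_indep: "indep_vars (\<lambda>_. count_space UNIV) \<tau> UNIV"
    and prob_good: "\<And>t. prob {\<omega> \<in> space M. \<tau> t \<omega> = 1} = \<pi>1"
    and prob_bad: "\<And>t. prob {\<omega> \<in> space M. \<tau> t \<omega> = 2} = 1 - \<pi>1"
begin

lemma env_measurable[measurable]: "\<tau> t \<in> measurable M (count_space UNIV)"
  using env_indep unfolding indep_vars_def by auto

lemma prob_env_other: "a \<noteq> 1 \<Longrightarrow> a \<noteq> 2 \<Longrightarrow> prob {\<omega> \<in> space M. \<tau> t \<omega> = a} = 0"
proof -
  assume "a \<noteq> 1" "a \<noteq> 2"
  let ?U = "{\<omega> \<in> space M. \<tau> t \<omega> = 1} \<union> {\<omega> \<in> space M. \<tau> t \<omega> = 2}"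
  have "prob ?U = prob {\<omega> \<in> space M. \<tau> t \<omega> = 1} + prob {\<omega> \<in> space M. \<tau> t \<omega> = 2}"
    by (rule finite_measure_Union) auto
  then have "prob (space M - ?U) = 0" using prob_good prob_bad by (subst prob_compl) auto
  moreover have "{\<omega> \<in> space M. \<tau> t \<omega> = a} \<subseteq> space M - ?U" using \<open>a \<noteq> 1\<close> \<open>a \<noteq> 2\<close> by auto
  ultimately have "prob {\<omega> \<in> space M. \<tau> t \<omega> = a} \<le> 0"
    using finite_measure_mono[of "{\<omega> \<in> space M. \<tau> t \<omega> = a}" "space M - ?U"] by simp
  then show ?thesis using measure_nonneg[of M "{\<omega> \<in> space M. \<tau> t \<omega> = a}"] by linarith
qed

lemma distr_env: "distr M (count_space UNIV) (\<tau> t) = distr M (count_space UNIV) (\<tau> 0)"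
proof (rule measure_eqI_countable[where A=UNIV])
  fix a :: nat
  have "emeasure (distr M (count_space UNIV) (\<tau> t')) {a} = emeasure M {\<omega> \<in> space M. \<tau> t' \<omega> = a}" for t'
    by (subst emeasure_distr) (auto intro: arg_cong[where f="emeasure M"])
  moreover have "prob {\<omega> \<in> space M. \<tau> t \<omega> = a} = prob {\<omega> \<in> space M. \<tau> 0 \<omega> = a}"
    using prob_good prob_bad prob_env_other by (cases "a = 1 \<or> a = 2") auto
  ultimately show "emeasure (distr M (count_space UNIV) (\<tau> t)) {a} = emeasure (distr M (count_space UNIV) (\<tau> 0)) {a}"
    by (simp add: emeasure_eq_measure)
qed auto

lemma ratio_seq_measurable:
  "l \<le> m \<Longrightarrow> (\<lambda>w. ratio_seq w l) \<in> borel_measurable (PiM {..<m} (\<lambda>_. count_space UNIV))"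
proof (induction l)
  case (Suc l)
  have "(\<lambda>w. w l) \<in> measurable (PiM {..<m} (\<lambda>_. count_space UNIV)) (count_space UNIV)"
    using Suc.prems by (intro measurable_component_singleton) simp
  then have "(\<lambda>w. fec (w l)) \<in> borel_measurable (PiM {..<m} (\<lambda>_. count_space UNIV))"
    by (rule measurable_compose) simp
  then show ?case
    using Suc by (simp add: ratio_map_def)
qed simp

lemma block_growth_measurable:
  "(\<lambda>w. block_growth w m) \<in> borel_measurable (PiM {..<m} (\<lambda>_. count_space UNIV))"
  unfolding block_growth_def by (intro borel_measurable_sum borel_measurable_ln ratio_seq_measurable) auto

definition mean_block_growth :: "nat \<Rightarrow> real" where
  "mean_block_growth m = integral\<^sup>L (PiM {..<m} (\<lambda>_. distr M (count_space UNIV) (\<tau> 0))) (\<lambda>w. block_growth w m)"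

lemma AE_block_means:
  assumes "m > 0"
  shows "AE \<omega> in M. (\<lambda>N. (\<Sum>n<N. block_growth (\<lambda>l. \<tau> (n * m + 3 + l) \<omega>) m) / N) \<longlonglongrightarrow> mean_block_growth m"
proof (rule strong_law_bounded)
  show "indep_vars (\<lambda>_. borel) (\<lambda>n \<omega>. block_growth (\<lambda>l. \<tau> (n * m + 3 + l) \<omega>) m) UNIV"
    by (rule indep_vars_window_blocks[OF env_indep block_growth_measurable block_growth_cong]) auto
  show "block_growth (\<lambda>l. \<tau> (n * m + 3 + l) \<omega>) m \<in> {real m * ln f .. real m * ln ratio_max}" for n \<omega>
    by (rule block_growth_bounds)
  show "real m * ln f < real m * ln ratio_max" using assms f_less_ratio_max f_pos by simp
  show "expectation (\<lambda>\<omega>. block_growth (\<lambda>l. \<tau> (n * m + 3 + l) \<omega>) m) = mean_block_growth m" for n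
    unfolding mean_block_growth_def
    by (rule expectation_window[OF env_indep distr_env assms block_growth_measurable block_growth_cong]) auto
qed

lemma AE_bad_frequency:
  "AE \<omega> in M. (\<lambda>t. (\<Sum>i<t. if \<tau> (Suc i) \<omega> = 1 then 0 else 1) / t) \<longlonglongrightarrow> 1 - \<pi>1"
proof (rule strong_law_bounded)
  define G :: "(nat \<Rightarrow> nat) \<Rightarrow> real" where "G w = (if w 0 = 1 then 0 else 1)" for w
  have "(\<lambda>w. w 0) \<in> measurable (PiM {..<1::nat} (\<lambda>_. count_space UNIV)) (count_space UNIV)"
    by (rule measurable_component_singleton) simp
  then have "G \<in> borel_measurable (PiM {..<1::nat} (\<lambda>_. count_space UNIV))"
    unfolding G_def by (rule measurable_compose[where f="\<lambda>w. w 0" and g="\<lambda>v. if v = 1 then 0 else 1"]) simp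
  then have "indep_vars (\<lambda>_. borel) (\<lambda>n \<omega>. G (\<lambda>l. \<tau> (n * 1 + 1 + l) \<omega>)) UNIV"
    by (rule indep_vars_window_blocks[OF env_indep]) (simp add: G_def)
  then show "indep_vars (\<lambda>_. borel) (\<lambda>i \<omega>. if \<tau> (Suc i) \<omega> = 1 then 0 else (1::real)) UNIV"
    by (simp add: G_def)
  show "(if \<tau> (Suc i) \<omega> = 1 then 0 else 1) \<in> {0::real..1}" for i \<omega> by simp
  show "(0::real) < 1" by simp
  show "expectation (\<lambda>\<omega>. if \<tau> (Suc i) \<omega> = 1 then 0 else 1) = 1 - \<pi>1" for i
  proof -
    define A where "A = space M - {\<omega> \<in> space M. \<tau> (Suc i) \<omega> = 1}"
    have [measurable]: "A \<in> sets M" unfolding A_def by measurable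
    have "expectation (\<lambda>\<omega>. if \<tau> (Suc i) \<omega> = 1 then 0 else 1) = expectation (indicator A)"
      by (rule Bochner_Integration.integral_cong) (auto simp: A_def indicator_def)
    also have "\<dots> = prob A" by simp
    also have "\<dots> = 1 - \<pi>1" unfolding A_def using prob_good[of "Suc i"] by (subst prob_compl) auto
    finally show ?thesis .
  qed
qed

context
  fixes z0 :: "real^2"
  assumes z0_nonneg: "\<forall>i. z0 $ i \<ge> 0" and z0_nonzero: "z0 \<noteq> 0"
begin

lemma ln_z1_rate_approx:
  assumes mean: "(\<lambda>N. (\<Sum>n<N. block_growth (\<lambda>l. \<tau> (n * Suc k + 3 + l) \<omega>) (Suc k)) / N)
      \<longlonglongrightarrow> mean_block_growth (Suc k)"
    and "\<epsilon> > 0"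
  shows "eventually (\<lambda>t. \<bar>ln (pop env_matrix \<tau> z0 t \<omega> $ 1) / t - mean_block_growth (Suc k) / Suc k\<bar>
    \<le> block_error / Suc k + \<epsilon>) sequentially"
proof (rule block_average_approx[OF _ _ _ mean \<open>\<epsilon> > 0\<close>])
  show "\<bar>ln (pop env_matrix \<tau> z0 (n * Suc k + 2 + Suc k) \<omega> $ 1) - ln (pop env_matrix \<tau> z0 (n * Suc k + 2) \<omega> $ 1)
      - block_growth (\<lambda>l. \<tau> (n * Suc k + 3 + l) \<omega>) (Suc k)\<bar> \<le> block_error" for n
    using ln_z1_block_bound[OF z0_nonneg z0_nonzero, where \<tau>=\<tau> and \<omega>=\<omega> and p="n * Suc k + 2" and m="Suc k"]
    by (simp add: numeral_3_eq_3 add.assoc)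
  show "\<bar>ln (pop env_matrix \<tau> z0 (t + d) \<omega> $ 1) - ln (pop env_matrix \<tau> z0 t \<omega> $ 1)\<bar>
      \<le> real d * log_ratio_bound" if "2 \<le> t" for t d
    using ln_z1_increment_bound[OF z0_nonneg z0_nonzero, where \<tau>=\<tau> and \<omega>=\<omega>] that by simp
qed simp

lemma AE_log_rate_converges: "\<exists>L. AE \<omega> in M. (\<lambda>t. ln (norm1 (pop env_matrix \<tau> z0 t \<omega>)) / t) \<longlonglongrightarrow> L"
proof -
  define a where "a k = mean_block_growth (Suc k) / Suc k" for k
  define c where "c k = block_error / Suc k" for k
  define good where "good \<omega> \<longleftrightarrow> (\<forall>k. (\<lambda>N. (\<Sum>n<N. block_growth (\<lambda>l. \<tau> (n * Suc k + 3 + l) \<omega>) (Suc k)) / N)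
      \<longlonglongrightarrow> mean_block_growth (Suc k))" for \<omega>
  have AE_good: "AE \<omega> in M. good \<omega>"
    unfolding good_def by (subst AE_all_countable) (intro allI AE_block_means, simp)
  have "c \<longlonglongrightarrow> 0"
    unfolding c_def using LIMSEQ_Suc[OF tendsto_divide_0[OF tendsto_const
        filterlim_at_top_imp_at_infinity[OF filterlim_real_sequentially]]] by simp
  have approx: "eventually (\<lambda>t. \<bar>ln (pop env_matrix \<tau> z0 t \<omega> $ 1) / t - a k\<bar> \<le> c k + \<epsilon>) sequentially"
    if "good \<omega>" "\<epsilon> > 0" for \<omega> k \<epsilon>
    unfolding a_def c_def by (rule ln_z1_rate_approx) (use that in \<open>auto simp: good_def\<close>)
  obtain \<omega>0 where "good \<omega>0" using eventually_happens'[OF ae_filter_bot AE_good] by blast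
  then have "convergent a" by (rule convergent_approximants[OF \<open>c \<longlonglongrightarrow> 0\<close> approx])
  then obtain L where "a \<longlonglongrightarrow> L" by (auto simp: convergent_def)
  have rate: "(\<lambda>t. ln (norm1 (pop env_matrix \<tau> z0 t \<omega>)) / t) \<longlonglongrightarrow> L" if "good \<omega>" for \<omega>
  proof -
    have "(\<lambda>t. ln (pop env_matrix \<tau> z0 t \<omega> $ 1) / t) \<longlonglongrightarrow> L"
      by (rule tendsto_of_approximants[OF \<open>c \<longlonglongrightarrow> 0\<close> \<open>a \<longlonglongrightarrow> L\<close> approx[OF that]])
    from tendsto_add[OF this ln_norm1_pop_minus_ln_z1_rate[OF z0_nonneg z0_nonzero, where \<tau>=\<tau> and \<omega>=\<omega>]]
    show ?thesis by simp
  qed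
  have "AE \<omega> in M. (\<lambda>t. ln (norm1 (pop env_matrix \<tau> z0 t \<omega>)) / t) \<longlonglongrightarrow> L"
    using AE_good by (rule AE_mp) (auto intro!: AE_I2 rate)
  then show ?thesis ..
qed

lemma log_rate_ge:
  assumes "AE \<omega> in M. (\<lambda>t. ln (norm1 (pop env_matrix \<tau> z0 t \<omega>)) / t) \<longlonglongrightarrow> L"
  shows "L \<ge> ln perron_root + (1 - \<pi>1) * ln loss"
proof -
  define bad where "bad \<omega> t = (\<Sum>i<t. if \<tau> (Suc i) \<omega> = 1 then 0 else 1 :: real)" for \<omega> t
  have "AE \<omega> in M. (\<lambda>t. ln (norm1 (pop env_matrix \<tau> z0 t \<omega>)) / t) \<longlonglongrightarrow> L \<and> (\<lambda>t. bad \<omega> t / t) \<longlonglongrightarrow> 1 - \<pi>1"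
    using assms AE_bad_frequency unfolding bad_def by auto
  then obtain \<omega> where rate: "(\<lambda>t. ln (norm1 (pop env_matrix \<tau> z0 t \<omega>)) / t) \<longlonglongrightarrow> L"
    and freq: "(\<lambda>t. bad \<omega> t / t) \<longlonglongrightarrow> 1 - \<pi>1"
    using eventually_happens'[OF ae_filter_bot] by blast
  obtain C where C: "\<And>t. C + real t * ln perron_root
      + (\<Sum>i<t. if \<tau> (Suc i) \<omega> = 1 then 0 else 1) * ln loss \<le> ln (norm1 (pop env_matrix \<tau> z0 t \<omega>))"
    using ln_norm1_pop_ge[OF z0_nonneg z0_nonzero, where \<tau>=\<tau> and \<omega>=\<omega>] by metis
  have "(\<lambda>t. C / real t + ln perron_root + bad \<omega> t / t * ln loss) \<longlonglongrightarrow> 0 + ln perron_root + (1 - \<pi>1) * ln loss"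
    by (intro tendsto_intros freq tendsto_divide_0[OF tendsto_const
        filterlim_at_top_imp_at_infinity[OF filterlim_real_sequentially]])
  moreover have "eventually (\<lambda>t. C / real t + ln perron_root + bad \<omega> t / t * ln loss
      \<le> ln (norm1 (pop env_matrix \<tau> z0 t \<omega>)) / t) sequentially"
    using eventually_gt_at_top[of 0]
  proof eventually_elim
    case (elim t)
    then have "(C + real t * ln perron_root + bad \<omega> t * ln loss) / t \<le> ln (norm1 (pop env_matrix \<tau> z0 t \<omega>)) / t"
      using C[of t] unfolding bad_def by (simp add: divide_right_mono)
    with elim show ?case by (simp add: field_simps)
  qed
  ultimately show ?thesis
    using tendsto_le[OF trivial_limit_sequentially rate] by simp
qed

end

end

lemma log_stoch_growth_eqI:
  assumes "prob_space M"
    and rate: "AE \<omega> in M. (\<lambda>t. ln (norm1 (pop A \<tau> z0 t \<omega>)) / real t) \<longlonglongrightarrow> L"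
  shows "log_stoch_growth M A \<tau> z0 = L"
  unfolding log_stoch_growth_def
proof (rule the_equality)
  fix L' assume "AE \<omega> in M. (\<lambda>t. ln (norm1 (pop A \<tau> z0 t \<omega>)) / real t) \<longlonglongrightarrow> L'"
  with rate have "AE \<omega> in M. (\<lambda>t. ln (norm1 (pop A \<tau> z0 t \<omega>)) / real t) \<longlonglongrightarrow> L' \<and>
      (\<lambda>t. ln (norm1 (pop A \<tau> z0 t \<omega>)) / real t) \<longlonglongrightarrow> L" by auto
  then obtain \<omega> where "(\<lambda>t. ln (norm1 (pop A \<tau> z0 t \<omega>)) / real t) \<longlonglongrightarrow> L'"
      "(\<lambda>t. ln (norm1 (pop A \<tau> z0 t \<omega>)) / real t) \<longlonglongrightarrow> L"
    using eventually_happens'[OF prob_space.ae_filter_bot[OF \<open>prob_space M\<close>]] by blast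
  then show "L' = L" by (rule LIMSEQ_unique)
qed (rule rate)

theorem mainTheorem7:
  fixes f F s \<Delta> \<pi>1 :: real
    and M :: "'w measure" and \<tau> :: "nat \<Rightarrow> 'w \<Rightarrow> nat" and z0 :: "real^2"
  assumes "f > 0" "F > 0" "0 < s" "s \<le> 1" "f + s * F > 1"
    and "0 < \<Delta>" "\<Delta> < F"
    and "0 < \<pi>1" "\<pi>1 < 1"
    and "prob_space M"
    and "prob_space.indep_vars M (\<lambda>_. count_space UNIV) \<tau> UNIV"
    and "\<And>t. measure M {\<omega> \<in> space M. \<tau> t \<omega> = 1} = \<pi>1"
    and "\<And>t. measure M {\<omega> \<in> space M. \<tau> t \<omega> = 2} = 1 - \<pi>1"
    and "\<forall>i. z0 $ i \<ge> 0" and "z0 \<noteq> 0"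
  defines "Aenv \<equiv> (\<lambda>k. if k = 1 then leslie2 f F s else leslie2 f (F - \<Delta>) s)"
  shows "log_stoch_growth M Aenv \<tau> z0
           \<ge> ln (spec_rad (leslie2 f F s)) + (1 - \<pi>1) * ln (1 - \<Delta> / F)
         \<and> spec_rad (leslie2 f F s) = (f + sqrt (f\<^sup>2 + 4 * s * F)) / 2
         \<and> (\<Delta> < F * (1 - spec_rad (leslie2 f F s) powr (1 / (\<pi>1 - 1))) \<longrightarrow>
           exp (log_stoch_growth M Aenv \<tau> z0) > 1 \<and>
           (AE \<omega> in M. filterlim (\<lambda>t. norm1 (pop Aenv \<tau> z0 t \<omega>)) at_top sequentially))"
proof -
  interpret prob_space M by (rule assms(10))
  interpret two_env_leslie_iid f F s \<Delta> M \<tau> \<pi>1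
    by (unfold_locales; use assms(1-3,6,7,11-13) in simp)
  have Aenv: "Aenv = env_matrix" by (auto simp: Aenv_def env_matrix_def fec_def)
  have \<rho>: "spec_rad (leslie2 f F s) = perron_root"
    using spec_rad_leslie2 assms unfolding perron_root_def by simp
  obtain L where rate: "AE \<omega> in M. (\<lambda>t. ln (norm1 (pop env_matrix \<tau> z0 t \<omega>)) / t) \<longlonglongrightarrow> L"
    using AE_log_rate_converges[OF assms(14,15)] by blast
  have growth: "log_stoch_growth M env_matrix \<tau> z0 = L"
    by (rule log_stoch_growth_eqI[OF \<open>prob_space M\<close> rate])
  have lower: "L \<ge> ln perron_root + (1 - \<pi>1) * ln loss"
    by (rule log_rate_ge[OF assms(14,15) rate])
  have large: "exp L > 1 \<and> (AE \<omega> in M. filterlim (\<lambda>t. norm1 (pop env_matrix \<tau> z0 t \<omega>)) at_top sequentially)"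
    if "\<Delta> < F * (1 - perron_root powr (1 / (\<pi>1 - 1)))"
  proof -
    have "L > 0"
      using growth_rate_pos_of_small_loss[OF perron_root_pos \<open>\<pi>1 < 1\<close> \<open>F > 0\<close> that] lower
      by (simp add: loss_def)
    have pos: "eventually (\<lambda>t. norm1 (pop env_matrix \<tau> z0 t \<omega>) > 0) sequentially" for \<omega>
      using eventually_ge_at_top[of 1] by eventually_elim (rule norm1_pop_pos[OF assms(14,15)])
    have "AE \<omega> in M. filterlim (\<lambda>t. norm1 (pop env_matrix \<tau> z0 t \<omega>)) at_top sequentially"
      using rate
    proof (rule AE_mp, intro AE_I2 impI)
      fix \<omega> assume "(\<lambda>t. ln (norm1 (pop env_matrix \<tau> z0 t \<omega>)) / t) \<longlonglongrightarrow> L"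
      then show "filterlim (\<lambda>t. norm1 (pop env_matrix \<tau> z0 t \<omega>)) at_top sequentially"
        using \<open>L > 0\<close> pos by (rule filterlim_at_top_of_log_rate)
    qed
    with \<open>L > 0\<close> show ?thesis by simp
  qed
  show ?thesis
    unfolding growth \<rho> Aenv using lower large by (simp add: loss_def perron_root_def)
qed

end
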